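(* Let $D$ be a positive squarefree integer with $N(\varepsilon)=-1$. Then $Z_D^{\mathrm{odd}}(s)$ and $Z_D^{\mathrm{even}}(s)$ continue meromorphically to $\mathbb{C}$ via \[ Z_D^{\mathrm{odd}}(s)=q^{s/2}\sum_{k\ge0}\binom{-s}{k}\frac{\varepsilon^{s+2k}}{\varepsilon^{2s+4k}-1},\qquad Z_D^{\mathrm{even}}(s)=q^{s/2}\sum_{k\ge0}\binom{-s}{k}\frac{(-1)^k}{\varepsilon^{2s+4k}-1}, \] where the series converge absolutely for all $s$ away from the poles of the summands and agree with the defining Dirichlet series for $\operatorname{Re}s>0$. Both functions have simple poles at $s=-2k+\frac{\pi m}{\log\varepsilon}i$ for $k\in\mathbb{Z}_{\ge0}$, $m\in\mathbb{Z}$.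
   Context: $D$ positive squarefree, $\mathcal{O}_D$ the ring of integers of $\mathbb{Q}(\sqrt D)\subset\mathbb{R}$, $\varepsilon>1$ its fundamental unit, $\overline{\varepsilon}$ its conjugate, $N$ the norm. $q=D$ if $D\equiv1\bmod4$, else $q=4D$. $F_D(n)=(\varepsilon^n-\overline{\varepsilon}^{\,n})/\sqrt q$. For $\operatorname{Re}s>0$, $Z_D^{\mathrm{odd}}(s)=\sum_{n\ge1}F_D(2n-1)^{-s}$ and $Z_D^{\mathrm{even}}(s)=\sum_{n\ge1}F_D(2n)^{-s}$. The generalized binomial coefficient is $\binom{-s}{k}=\frac{(-s)(-s-1)\cdots(-s-k+1)}{k!}$, and $q^{s/2}$, $\varepsilon^{s}$ use real positive bases with principal powers. *)

theory Defs
  imports "HOL-Complex_Analysis.Complex_Analysis" "HOL-Computational_Algebra.Squarefree"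
begin

text \<open>Real quadratic field Q(sqrt D) embedded in the reals. The ring of integers is
  Z[omega] with omega = (1+sqrt D)/2 if D = 1 mod 4 and omega = sqrt D otherwise.\<close>

definition omegaD :: "int \<Rightarrow> real" where
  "omegaD D = (if D mod 4 = 1 then (1 + sqrt (real_of_int D)) / 2 else sqrt (real_of_int D))"

definition omegaD_conj :: "int \<Rightarrow> real" where
  "omegaD_conj D = (if D mod 4 = 1 then (1 - sqrt (real_of_int D)) / 2 else - sqrt (real_of_int D))"

definition in_OD :: "int \<Rightarrow> real \<Rightarrow> bool" where
  "in_OD D x \<longleftrightarrow> (\<exists>a b :: int. x = of_int a + of_int b * omegaD D)"

definition qconj :: "int \<Rightarrow> real \<Rightarrow> real" where
  "qconj D x = (THE y. \<exists>a b :: int. x = of_int a + of_int b * omegaD D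
                          \<and> y = of_int a + of_int b * omegaD_conj D)"

definition qnorm :: "int \<Rightarrow> real \<Rightarrow> real" where
  "qnorm D x = x * qconj D x"

definition is_unit_OD :: "int \<Rightarrow> real \<Rightarrow> bool" where
  "is_unit_OD D u \<longleftrightarrow> u \<noteq> 0 \<and> in_OD D u \<and> in_OD D (inverse u)"

definition is_fundamental_unit :: "int \<Rightarrow> real \<Rightarrow> bool" where
  "is_fundamental_unit D e \<longleftrightarrow> is_unit_OD D e \<and> e > 1 \<and>
     (\<forall>u. is_unit_OD D u \<and> u > 1 \<longrightarrow> e \<le> u)"

definition qD :: "int \<Rightarrow> int" where
  "qD D = (if D mod 4 = 1 then D else 4 * D)"

definition FD :: "int \<Rightarrow> real \<Rightarrow> nat \<Rightarrow> real" where
  "FD D e n = (e ^ n - qconj D e ^ n) / sqrt (real_of_int (qD D))"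

definition Z_odd :: "int \<Rightarrow> real \<Rightarrow> complex \<Rightarrow> complex" where
  "Z_odd D e s = (\<Sum>n. complex_of_real (FD D e (2 * n + 1)) powr (- s))"

definition Z_even :: "int \<Rightarrow> real \<Rightarrow> complex \<Rightarrow> complex" where
  "Z_even D e s = (\<Sum>n. complex_of_real (FD D e (2 * n + 2)) powr (- s))"

definition G_odd_term :: "int \<Rightarrow> real \<Rightarrow> complex \<Rightarrow> nat \<Rightarrow> complex" where
  "G_odd_term D e s k = ((- s) gchoose k) *
     (complex_of_real e powr (s + 2 * of_nat k)) /
     (complex_of_real e powr (2 * s + 4 * of_nat k) - 1)"

definition G_even_term :: "int \<Rightarrow> real \<Rightarrow> complex \<Rightarrow> nat \<Rightarrow> complex" where
  "G_even_term D e s k = ((- s) gchoose k) * (- 1) ^ k /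
     (complex_of_real e powr (2 * s + 4 * of_nat k) - 1)"

definition G_odd :: "int \<Rightarrow> real \<Rightarrow> complex \<Rightarrow> complex" where
  "G_odd D e s = complex_of_real (real_of_int (qD D)) powr (s / 2) * (\<Sum>k. G_odd_term D e s k)"

definition G_even :: "int \<Rightarrow> real \<Rightarrow> complex \<Rightarrow> complex" where
  "G_even D e s = complex_of_real (real_of_int (qD D)) powr (s / 2) * (\<Sum>k. G_even_term D e s k)"

definition pole_set :: "real \<Rightarrow> complex set" where
  "pole_set e = {- 2 * of_nat k + complex_of_real (pi * of_int m / ln e) * \<i> | (k :: nat) (m :: int). True}"

end

theory Submission
  imports Defs
begin

text \<open>Since \<open>N(\<epsilon>) = -1\<close>, the conjugate of \<open>\<epsilon>\<close> is \<open>-1/\<epsilon>\<close>, so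
  \<open>F_D(m) = \<epsilon>^m (1 \<plusminus> \<epsilon>^(-2m)) / sqrt q\<close>, the sign depending on the parity of \<open>m\<close>.
  Expanding \<open>(1 \<plusminus> \<epsilon>^(-2m))^(-s)\<close> by the binomial series and summing over \<open>m\<close> first,
  which is legitimate because the double series converges absolutely for \<open>Re s > 0\<close>, turns
  each binomial term into a geometric series and yields the continuation series. Its \<open>k\<close>-th
  summand is dominated, uniformly for bounded \<open>s\<close>, by a constant times
  \<open>|binom(-s,k)| \<epsilon>^(-2k)\<close>, so the series converges locally uniformly away from the zeros of
  the denominators \<open>\<epsilon>^(2s+4k) - 1\<close>. These zeros lie on the lines \<open>Re s = -2k\<close>, so at each
  of them exactly one summand is singular, with a simple zero of its denominator and a nonzero
  numerator: a simple pole.\<close>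

lemma suminf_swap_norm_summable:
  fixes f :: "nat \<Rightarrow> nat \<Rightarrow> complex"
  assumes rows: "\<And>n. summable (\<lambda>k. norm (f n k))"
    and row_sums: "summable (\<lambda>n. \<Sum>k. norm (f n k))"
    and columns: "\<And>k. summable (\<lambda>n. norm (f n k))"
  shows "summable (\<lambda>n. \<Sum>k. f n k)" and "(\<Sum>n. \<Sum>k. f n k) = (\<Sum>k. \<Sum>n. f n k)"
proof -
  have row_has_sum: "((\<lambda>k. norm (f n k)) has_sum (\<Sum>k. norm (f n k))) UNIV" for n
    using rows[of n] by (intro sums_nonneg_imp_has_sum) (auto simp: summable_sums)
  have "(\<lambda>n. \<Sum>k. norm (f n k)) summable_on UNIV"
    using row_sums by (subst summable_on_UNIV_nonneg_real_iff) (auto intro: suminf_nonneg rows)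
  with row_has_sum have "(\<lambda>(n,k). norm (f n k)) summable_on Sigma UNIV (\<lambda>_. UNIV)"
    by (intro summable_on_SigmaI[where g = "\<lambda>n. \<Sum>k. norm (f n k)"]) auto
  then have "(\<lambda>x. norm ((\<lambda>(n,k). f n k) x)) summable_on UNIV \<times> UNIV"
    by (simp add: case_prod_unfold)
  then have "(\<lambda>(n,k). f n k) summable_on UNIV \<times> UNIV"
    by (rule abs_summable_summable)
  then obtain S where S: "((\<lambda>(n,k). f n k) has_sum S) (UNIV \<times> UNIV)"
    by (auto simp: summable_on_def)
  have row: "((\<lambda>k. f n k) has_sum (\<Sum>k. f n k)) UNIV" for n
    using rows[of n] by (intro norm_summable_imp_has_sum) (auto intro: summable_sums summable_norm_cancel)
  have "((\<lambda>n. \<Sum>k. f n k) has_sum S) UNIV"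
    by (rule has_sum_SigmaD[where B = "\<lambda>_. UNIV"]) (use S row in \<open>auto simp: case_prod_unfold\<close>)
  then have by_rows: "(\<lambda>n. \<Sum>k. f n k) sums S" by (rule has_sum_imp_sums)
  from S have S': "((\<lambda>(k,n). f n k) has_sum S) (UNIV \<times> UNIV)"
    by (subst (asm) has_sum_swap) (simp add: case_prod_unfold)
  have column: "((\<lambda>n. f n k) has_sum (\<Sum>n. f n k)) UNIV" for k
    using columns[of k] by (intro norm_summable_imp_has_sum) (auto intro: summable_sums summable_norm_cancel)
  have "((\<lambda>k. \<Sum>n. f n k) has_sum S) UNIV"
    by (rule has_sum_SigmaD[where B = "\<lambda>_. UNIV"]) (use S' column in \<open>auto simp: case_prod_unfold\<close>)
  then have "(\<lambda>k. \<Sum>n. f n k) sums S" by (rule has_sum_imp_sums)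
  with by_rows show "summable (\<lambda>n. \<Sum>k. f n k)" "(\<Sum>n. \<Sum>k. f n k) = (\<Sum>k. \<Sum>n. f n k)"
    by (auto simp: sums_iff)
qed

lemma cpow_of_real_exp: "x > 0 \<Longrightarrow> complex_of_real x powr w = exp (w * of_real (ln x))"
  by (simp add: powr_def Ln_of_real)

lemma norm_cpow_of_real: "x > 0 \<Longrightarrow> norm (complex_of_real x powr w) = x powr Re w"
  by (simp add: norm_powr_real_powr)

lemma inverse_cpow_of_real_add_nat:
  assumes "x > 0"
  shows "inverse (complex_of_real x powr (s + 2 * of_nat k)) =
           inverse (complex_of_real x powr s) * complex_of_real (1 / x\<^sup>2) ^ k"
proof -
  have "complex_of_real x powr (2 * of_nat k) = complex_of_real x ^ (2 * k)"
    using assms powr_nat'[of "complex_of_real x" "2 * k"] by simp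
  then show ?thesis
    by (simp add: powr_add power_mult power_inverse divide_inverse)
qed

lemma norm_pochhammer_le:
  fixes s :: complex
  assumes "norm s \<le> R"
  shows "norm (pochhammer s k) \<le> pochhammer R k"
proof (induction k)
  case (Suc k)
  have "norm (s + of_nat k) \<le> R + real k"
    using assms norm_triangle_ineq[of s "of_nat k"] by simp
  moreover have "0 \<le> R" using assms norm_ge_zero[of s] by linarith
  then have "0 \<le> pochhammer R k" by (induction k) (auto simp: pochhammer_Suc)
  ultimately show ?case
    using Suc by (auto simp: pochhammer_Suc norm_mult intro: mult_mono)
qed simp

definition binomial_majorant :: "real \<Rightarrow> nat \<Rightarrow> real" where
  "binomial_majorant R k = pochhammer R k / fact k"

lemma binomial_majorant_nonneg: "R \<ge> 0 \<Longrightarrow> binomial_majorant R k \<ge> 0"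
  by (cases "R = 0") (auto simp: binomial_majorant_def pochhammer_0_left pochhammer_nonneg)

lemma norm_gbinomial_minus_le:
  fixes s :: complex
  assumes "norm s \<le> R"
  shows "norm ((- s) gchoose k) \<le> binomial_majorant R k"
proof -
  have "norm ((- s) gchoose k) = norm (pochhammer s k) / fact k"
    by (simp add: gbinomial_pochhammer norm_mult norm_divide norm_power)
  also have "\<dots> \<le> binomial_majorant R k"
    unfolding binomial_majorant_def using norm_pochhammer_le[OF assms]
    by (intro divide_right_mono) auto
  finally show ?thesis .
qed

lemma binomial_majorant_sums:
  assumes "0 \<le> y" "y < 1"
  shows "(\<lambda>k. binomial_majorant R k * y ^ k) sums ((1 - y) powr (- R))"
proof -
  have "(\<lambda>k. ((- R) gchoose k) * (- y) ^ k) sums (1 + (- y)) powr (- R)"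
    using assms by (intro gen_binomial_real) auto
  moreover have "((- R) gchoose k) * (- y) ^ k = binomial_majorant R k * y ^ k" for k
  proof -
    have "(- 1 :: real) ^ k * (- 1) ^ k = 1" by (simp flip: power_add)
    then show ?thesis
      by (simp add: gbinomial_pochhammer binomial_majorant_def power_minus[of y] mult_ac)
  qed
  ultimately show ?thesis by simp
qed

lemma holomorphic_gbinomial_minus: "(\<lambda>s::complex. (- s) gchoose k) holomorphic_on A"
proof -
  have "(\<lambda>s::complex. (\<Prod>i = 0..<k. - s - of_nat i) / fact k) holomorphic_on A"
    by (intro holomorphic_intros) auto
  then show ?thesis by (simp add: gbinomial_prod_rev)
qed

lemma gbinomial_minus_nonzero:
  assumes "Re p \<le> - real k"
  shows "(- p) gchoose k \<noteq> 0"
proof -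
  have "- p - of_nat i \<noteq> 0" if "i < k" for i
  proof
    assume "- p - of_nat i = 0"
    then have "Re p = - real i" by (simp add: complex_eq_iff)
    with assms that show False by simp
  qed
  then show ?thesis by (simp add: gbinomial_prod_rev)
qed

lemma inverse_power_ratio:
  fixes W :: "'a :: field"
  assumes W: "W \<noteq> 0" and c: "c \<le> 2"
  shows "inverse W ^ c / (1 - inverse W ^ 2) = W ^ (2 - c) / (W ^ 2 - 1)"
proof -
  have "W ^ 2 * inverse W ^ c = W ^ (2 - c) * (W ^ c * inverse W ^ c)"
    using c by (simp flip: power_add)
  also have "\<dots> = W ^ (2 - c)"
    using W by (simp flip: power_mult_distrib)
  finally have num: "W ^ 2 * inverse W ^ c = W ^ (2 - c)" .
  have den: "W ^ 2 * (1 - inverse W ^ 2) = W ^ 2 - 1"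
    using W by (simp add: right_diff_distrib power_inverse)
  have "inverse W ^ c / (1 - inverse W ^ 2) = (W ^ 2 * inverse W ^ c) / (W ^ 2 * (1 - inverse W ^ 2))"
    using W by simp
  then show ?thesis unfolding num den .
qed

text \<open>\<open>G_odd\<close> and \<open>G_even\<close> are \<open>series\<close> for the numerators \<open>u k s = \<epsilon>^(s+2k)\<close> and
  \<open>u k s = (-1)^k\<close> respectively.\<close>
locale binomial_pole_series =
  fixes e q :: real and u :: "nat \<Rightarrow> complex \<Rightarrow> complex"
  assumes base_gt_1: "e > 1" and q_pos: "q > 0"
    and holomorphic_u: "\<And>k. u k holomorphic_on UNIV"
    and u_nonzero: "\<And>k s. u k s \<noteq> 0"
    and norm_u_le: "\<And>k s. 1 \<le> 2 * Re s + 4 * real k \<Longrightarrow> norm (u k s) \<le> e powr (Re s + 2 * real k)"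
begin

definition denom :: "nat \<Rightarrow> complex \<Rightarrow> complex" where
  "denom k s = complex_of_real e powr (2 * s + 4 * of_nat k) - 1"

definition summand :: "complex \<Rightarrow> nat \<Rightarrow> complex" where
  "summand s k = ((- s) gchoose k) * u k s / denom k s"

definition series :: "complex \<Rightarrow> complex" where
  "series s = complex_of_real q powr (s / 2) * (\<Sum>k. summand s k)"

definition poles :: "complex set" where
  "poles = {s. \<exists>k. denom k s = 0}"

definition tail :: "nat \<Rightarrow> complex \<Rightarrow> complex" where
  "tail N s = (\<Sum>k. summand s (k + N))"

definition majorant :: "real \<Rightarrow> nat \<Rightarrow> real" where
  "majorant R k = binomial_majorant R k * e powr R * (1 / e\<^sup>2) ^ k / (1 - 1 / e)"

text \<open>On \<open>halfplane N\<close> every summand from index \<open>N\<close> on is regular and dominated by the majorant.\<close>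
definition halfplane :: "nat \<Rightarrow> complex set" where
  "halfplane N = {s. 1 < 2 * Re s + 4 * real N}"

lemma denom_exp: "denom k s = exp ((2 * s + 4 * of_nat k) * of_real (ln e)) - 1"
  using base_gt_1 by (simp add: denom_def cpow_of_real_exp)

lemma norm_denom_ge:
  assumes "1 \<le> 2 * Re s + 4 * real k"
  shows "(1 - 1 / e) * e powr (2 * Re s + 4 * real k) \<le> norm (denom k s)"
proof -
  define X where "X = e powr (2 * Re s + 4 * real k)"
  have "e powr 1 \<le> X"
    unfolding X_def using assms base_gt_1 by (intro powr_mono) auto
  then have "(1 - 1 / e) * X \<le> X - 1"
    using base_gt_1 by (simp add: field_simps)
  also have "X - 1 \<le> norm (denom k s)"
    using norm_triangle_ineq2[of "complex_of_real e powr (2 * s + 4 * of_nat k)" 1] base_gt_1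
    by (simp add: denom_def X_def norm_cpow_of_real)
  finally show ?thesis unfolding X_def .
qed

lemma denom_nonzero: "1 \<le> 2 * Re s + 4 * real k \<Longrightarrow> denom k s \<noteq> 0"
  using norm_denom_ge[of s k] base_gt_1 by (auto simp: field_simps)

lemma Re_eq_if_denom_eq_0:
  assumes "denom k s = 0"
  shows "Re s = - 2 * real k"
proof -
  have "e powr (2 * Re s + 4 * real k) = 1"
    using assms base_gt_1 norm_cpow_of_real[of e "2 * s + 4 * of_nat k"] by (simp add: denom_def)
  then show ?thesis using base_gt_1 by simp
qed

lemma norm_summand_le:
  assumes k: "1 \<le> 2 * Re s + 4 * real k" and R: "norm s \<le> R"
  shows "norm (summand s k) \<le> majorant R k"
proof -
  define A where "A = Re s + 2 * real k"
  have e: "e > 1" by (rule base_gt_1)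
  have R0: "0 \<le> R" using R norm_ge_zero[of s] by linarith
  have "norm ((- s) gchoose k) * norm (u k s) \<le> binomial_majorant R k * e powr A"
    using norm_gbinomial_minus_le[OF R] norm_u_le[OF k] binomial_majorant_nonneg[OF R0]
    by (intro mult_mono) (auto simp: A_def)
  moreover have "(1 - 1 / e) * (e powr A * e powr A) \<le> norm (denom k s)"
    using norm_denom_ge[OF k] unfolding powr_add[symmetric] A_def by (simp add: algebra_simps)
  moreover have "0 < (1 - 1 / e) * (e powr A * e powr A)" using e by simp
  ultimately have "norm (summand s k) \<le>
      binomial_majorant R k * e powr A / ((1 - 1 / e) * (e powr A * e powr A))"
    unfolding summand_def norm_mult norm_divide
    by (intro frac_le) (auto intro: mult_nonneg_nonneg binomial_majorant_nonneg[OF R0])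
  also have "\<dots> = binomial_majorant R k * e powr (- Re s) * (1 / e\<^sup>2) ^ k / (1 - 1 / e)"
  proof -
    have "e powr (2 * real k) = (e\<^sup>2) ^ k"
      using e powr_realpow[of e "2 * k"] by (simp flip: power_mult)
    then have "e powr A = e powr Re s * (e\<^sup>2) ^ k"
      by (simp add: A_def powr_add)
    then have "e powr A / (e powr A * e powr A) = e powr (- Re s) * (1 / e\<^sup>2) ^ k"
      using e by (simp add: powr_minus power_one_over field_simps)
    moreover have "b * x / (c * (x * x)) = b * (x / (x * x)) / c" for b x c :: real
      by (simp add: mult.commute)
    ultimately show ?thesis
      by (metis mult.assoc)
  qed
  also have "\<dots> \<le> majorant R k"
    unfolding majorant_def using e R0 abs_Re_le_cmod[of s] R binomial_majorant_nonneg[OF R0]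
    by (intro divide_right_mono mult_right_mono mult_left_mono) auto
  finally show ?thesis .
qed

lemma summable_majorant: "summable (majorant R)"
proof -
  have "summable (\<lambda>k. binomial_majorant R k * (1 / e\<^sup>2) ^ k)"
    using binomial_majorant_sums[of "1 / e\<^sup>2" R] base_gt_1 by (auto simp: sums_iff)
  then have "summable (\<lambda>k. e powr R / (1 - 1 / e) * (binomial_majorant R k * (1 / e\<^sup>2) ^ k))"
    by (rule summable_mult)
  then show ?thesis
    by (simp add: majorant_def[abs_def] mult_ac)
qed

lemma ex_halfplane: "\<exists>N. s \<in> halfplane N"
proof -
  obtain N :: nat where "real N > 1 - Re s" using reals_Archimedean2 by blast
  then show ?thesis by (intro exI[of _ N]) (simp add: halfplane_def)
qed

lemma open_halfplane: "open (halfplane N)"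
proof -
  have "halfplane N = {s. Re s > (1 - 4 * real N) / 2}"
    by (auto simp: halfplane_def field_simps)
  then show ?thesis by (simp only: open_halfspace_Re_gt)
qed

lemma summable_norm_summand: "summable (\<lambda>k. norm (summand s k))"
proof -
  obtain N where "s \<in> halfplane N" using ex_halfplane by blast
  then have "eventually (\<lambda>k. norm (norm (summand s k)) \<le> majorant (norm s) k) sequentially"
    unfolding eventually_at_top_linorder halfplane_def
    by (intro exI[of _ N]) (auto intro!: norm_summand_le)
  then show ?thesis
    by (rule summable_comparison_test_ev) (rule summable_majorant)
qed

lemma suminf_summand_split: "(\<Sum>k. summand s k) = tail N s + (\<Sum>k<N. summand s k)"
  unfolding tail_def
  by (rule suminf_split_initial_segment[OF summable_norm_cancel[OF summable_norm_summand]])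

lemma holomorphic_denom: "denom k holomorphic_on A"
  unfolding denom_def by (intro holomorphic_intros)

lemma open_denom_nonzero: "open {s. denom k s \<noteq> 0}"
  using holomorphic_on_imp_continuous_on[OF holomorphic_denom]
  by (intro open_Collect_neq) auto

lemma holomorphic_summand:
  assumes "\<And>s. s \<in> A \<Longrightarrow> denom k s \<noteq> 0"
  shows "(\<lambda>s. summand s k) holomorphic_on A"
  unfolding summand_def using assms
  by (intro holomorphic_intros holomorphic_gbinomial_minus holomorphic_denom
      holomorphic_on_subset[OF holomorphic_u]) auto

lemma holomorphic_tail: "tail N holomorphic_on halfplane N"
  unfolding tail_def
proof (rule holomorphic_uniform_sequence[OF open_halfplane])
  show "(\<lambda>s. \<Sum>i<n. summand s (i + N)) holomorphic_on halfplane N" for n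
    by (intro holomorphic_on_sum holomorphic_summand denom_nonzero) (auto simp: halfplane_def)
next
  fix x assume x: "x \<in> halfplane N"
  define d where "d = (2 * Re x + 4 * real N - 1) / 4"
  have d: "d > 0" using x by (simp add: halfplane_def d_def)
  have ball: "cball x d \<subseteq> halfplane N"
  proof
    fix s assume "s \<in> cball x d"
    then have "Re x - Re s \<le> d"
      using abs_Re_le_cmod[of "x - s"] by (simp add: dist_norm)
    with x show "s \<in> halfplane N" by (simp add: halfplane_def d_def)
  qed
  have "uniform_limit (cball x d) (\<lambda>n s. \<Sum>i<n. summand s (i + N))
          (\<lambda>s. \<Sum>i. summand s (i + N)) sequentially"
  proof (rule Weierstrass_m_test)
    fix n s assume s: "s \<in> cball x d"
    then have "1 \<le> 2 * Re s + 4 * real (n + N)" using ball by (auto simp: halfplane_def)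
    moreover have "norm s \<le> norm x + d"
      using s norm_triangle_ineq2[of s x] by (simp add: dist_norm norm_minus_commute)
    ultimately show "norm (summand s (n + N)) \<le> majorant (norm x + d) (n + N)"
      by (rule norm_summand_le)
  next
    show "summable (\<lambda>n. majorant (norm x + d) (n + N))"
      using summable_majorant by (subst summable_iff_shift)
  qed
  with d ball show "\<exists>d>0. cball x d \<subseteq> halfplane N \<and> uniform_limit (cball x d)
      (\<lambda>n s. \<Sum>i<n. summand s (i + N)) (\<lambda>s. \<Sum>i. summand s (i + N)) sequentially"
    by blast
qed

lemma holomorphic_prefactor: "(\<lambda>s. complex_of_real q powr (s / 2)) holomorphic_on A"
  by (intro holomorphic_intros) auto

lemma prefactor_nonzero: "complex_of_real q powr (s / 2) \<noteq> 0"
  using q_pos by simp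

lemma series_analytic_at:
  assumes "x \<notin> poles"
  shows "series analytic_on {x}"
proof -
  obtain N where N: "x \<in> halfplane N" using ex_halfplane by blast
  define S where "S = halfplane N \<inter> (\<Inter>k<N. {s. denom k s \<noteq> 0})"
  have "open S" unfolding S_def using open_halfplane open_denom_nonzero by auto
  moreover have "x \<in> S" using assms N by (auto simp: S_def poles_def)
  moreover have "series holomorphic_on S"
  proof (rule holomorphic_transform)
    show "(\<lambda>s. complex_of_real q powr (s / 2) * (tail N s + (\<Sum>k<N. summand s k))) holomorphic_on S"
      by (intro holomorphic_intros holomorphic_on_subset[OF holomorphic_tail] holomorphic_summand)
        (auto simp: S_def)
  qed (simp add: series_def suminf_summand_split[of _ N])
  ultimately show ?thesis using analytic_at by blast
qed

lemma series_analytic: "series analytic_on (UNIV - poles)"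
  using series_analytic_at by (subst analytic_on_analytic_at) blast

lemma denom_simple_zero:
  assumes "denom j p = 0"
  obtains D where "D holomorphic_on UNIV" "D p \<noteq> 0" "\<And>s. denom j s = D s * (s - p)"
proof -
  define D where "D s = (if s = p then deriv (denom j) p else (denom j s - denom j p) / (s - p))" for s
  have "D holomorphic_on UNIV"
    unfolding D_def by (rule pole_lemma_open[OF holomorphic_denom]) simp
  moreover have "(denom j has_field_derivative
      exp ((2 * p + 4 * of_nat j) * of_real (ln e)) * (2 * of_real (ln e))) (at p)"
    unfolding denom_exp[abs_def] by (auto intro!: derivative_eq_intros)
  then have "deriv (denom j) p = 2 * of_real (ln e)"
    using assms by (simp add: DERIV_imp_deriv denom_exp)
  then have "D p \<noteq> 0" using base_gt_1 by (simp add: D_def)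
  moreover have "denom j s = D s * (s - p)" for s
    using assms by (simp add: D_def)
  ultimately show ?thesis by (rule that)
qed

lemma suminf_summand_regular_part:
  assumes "denom j p = 0"
  obtains S A where "open S" "p \<in> S" "A holomorphic_on S"
    "\<And>s. (\<Sum>k. summand s k) = A s + summand s j"
proof -
  have Re_p: "Re p = - 2 * real j" by (rule Re_eq_if_denom_eq_0[OF assms])
  define N where "N = 2 * j + 1"
  define S where "S = halfplane N \<inter> (\<Inter>k\<in>{..<N} - {j}. {s. denom k s \<noteq> 0})"
  define A where "A s = tail N s + (\<Sum>k\<in>{..<N} - {j}. summand s k)" for s
  have "open S" unfolding S_def using open_halfplane open_denom_nonzero by auto
  moreover have "p \<in> S"
    using Re_p Re_eq_if_denom_eq_0[of _ p] by (auto simp: S_def halfplane_def N_def)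
  moreover have "A holomorphic_on S"
    unfolding A_def
    by (intro holomorphic_intros holomorphic_on_subset[OF holomorphic_tail] holomorphic_summand)
      (auto simp: S_def)
  moreover have "(\<Sum>k. summand s k) = A s + summand s j" for s
  proof -
    have "j \<in> {..<N}" by (simp add: N_def)
    then show ?thesis
      unfolding suminf_summand_split[of s N] A_def
      using sum.remove[OF finite_lessThan, of j N "summand s"] by (simp add: algebra_simps)
  qed
  ultimately show ?thesis by (rule that)
qed

lemma series_pole_factorization:
  assumes "p \<in> poles"
  obtains r g where "r > 0" "g holomorphic_on ball p r" "g p \<noteq> 0"
    "\<And>w. w \<in> ball p r - {p} \<Longrightarrow> series w = g w * (w - p) powi (-1)"
proof -
  obtain j where j: "denom j p = 0" using assms by (auto simp: poles_def)
  obtain D where D: "D holomorphic_on UNIV" "D p \<noteq> 0" "\<And>s. denom j s = D s * (s - p)"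
    using denom_simple_zero[OF j] by blast
  obtain S A where S: "open S" "p \<in> S" "A holomorphic_on S"
    and A: "\<And>s. (\<Sum>k. summand s k) = A s + summand s j"
    using suminf_summand_regular_part[OF j] by blast
  define c where "c s = ((- s) gchoose j) * u j s" for s
  have "c p \<noteq> 0"
    using gbinomial_minus_nonzero[of p j] Re_eq_if_denom_eq_0[OF j] u_nonzero by (simp add: c_def)
  have "open (S \<inter> {s. D s \<noteq> 0})"
    using S(1) holomorphic_on_imp_continuous_on[OF D(1)] by (intro open_Int open_Collect_neq) auto
  then obtain r where r: "r > 0" "ball p r \<subseteq> S \<inter> {s. D s \<noteq> 0}"
    using S(2) D(2) openE[of _ p] by blast
  define g where "g s = complex_of_real q powr (s / 2) * (A s * D s * (s - p) + c s) / D s" for s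
  show ?thesis
  proof (rule that[of r g])
    show "g holomorphic_on ball p r"
      unfolding g_def c_def using r(2)
      by (intro holomorphic_intros holomorphic_prefactor holomorphic_gbinomial_minus
          holomorphic_on_subset[OF S(3)] holomorphic_on_subset[OF D(1)] holomorphic_on_subset[OF holomorphic_u])
        auto
    show "g p \<noteq> 0"
      using \<open>c p \<noteq> 0\<close> D(2) prefactor_nonzero by (simp add: g_def)
    show "series w = g w * (w - p) powi (-1)" if w: "w \<in> ball p r - {p}" for w
    proof -
      have "D w \<noteq> 0" "w \<noteq> p" using w r(2) by auto
      have "series w = complex_of_real q powr (w / 2) * (A w + c w / (D w * (w - p)))"
        unfolding series_def A by (simp add: summand_def c_def D(3))
      with \<open>D w \<noteq> 0\<close> \<open>w \<noteq> p\<close> show ?thesis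
        by (simp add: g_def power_int_minus field_simps)
    qed
  qed (fact r(1))
qed

lemma series_pole:
  assumes "p \<in> poles"
  shows "is_pole series p" and "zorder series p = -1" and "isolated_singularity_at series p"
proof -
  obtain r g where r: "r > 0" and g: "g holomorphic_on ball p r" "g p \<noteq> 0"
    and eq: "\<And>w. w \<in> ball p r - {p} \<Longrightarrow> series w = g w * (w - p) powi (-1)"
    using series_pole_factorization[OF assms] by blast
  show "zorder series p = -1"
    by (rule zorder_eqI[of "ball p r" p g]) (use r g eq in auto)
  have "eventually (\<lambda>w. w \<in> ball p r - {p}) (at p)"
    using eventually_at_ball'[OF r, of p UNIV] by simp
  then have "eventually (\<lambda>w. series w = g w / (w - p) ^ 1) (at p)"
    by eventually_elim (use eq in \<open>auto simp: power_int_minus divide_inverse\<close>)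
  moreover have "is_pole (\<lambda>w. g w / (w - p) ^ 1) p"
    by (rule is_pole_basic[of g "ball p r"]) (use r g in auto)
  ultimately show "is_pole series p"
    using is_pole_cong[of series "\<lambda>w. g w / (w - p) ^ 1" p p] by simp
  have "(\<lambda>w. g w * (w - p) powi (-1)) holomorphic_on ball p r - {p}"
    by (intro holomorphic_intros holomorphic_on_subset[OF g(1)]) auto
  then have "series holomorphic_on ball p r - {p}"
    by (rule holomorphic_transform) (use eq in auto)
  then show "isolated_singularity_at series p"
    by (rule isolated_singularity_at_holomorphic) (use r in auto)
qed

lemma series_meromorphic: "series meromorphic_on UNIV"
  unfolding meromorphic_on_altdef
proof
  fix z :: complex
  show "isolated_singularity_at series z \<and> not_essential series z"
  proof (cases "z \<in> poles")
    case True
    then show ?thesis using series_pole[OF True] by (auto simp: not_essential_def)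
  next
    case False
    then show ?thesis using series_analytic_at[OF False]
      by (auto intro: isolated_singularity_at_analytic not_essential_analytic)
  qed
qed

lemma poles_eq_pole_set: "poles = pole_set e"
proof (intro set_eqI iffI)
  fix s assume "s \<in> poles"
  then obtain k where "exp ((2 * s + 4 * of_nat k) * of_real (ln e)) = 1"
    by (auto simp: poles_def denom_exp)
  then obtain m :: int where re: "(2 * Re s + 4 * real k) * ln e = 0"
    and im: "2 * Im s * ln e = of_int (2 * m) * pi"
    by (subst (asm) exp_eq_1) auto
  have "Re s = - 2 * real k" using re base_gt_1 by simp
  moreover have "Im s = pi * of_int m / ln e" using im base_gt_1 by (simp add: field_simps)
  ultimately have "s = - 2 * of_nat k + complex_of_real (pi * of_int m / ln e) * \<i>"
    by (simp add: complex_eq_iff)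
  then show "s \<in> pole_set e" unfolding pole_set_def by blast
next
  fix s assume "s \<in> pole_set e"
  then obtain k :: nat and m :: int
    where s: "s = - 2 * of_nat k + complex_of_real (pi * of_int m / ln e) * \<i>"
    by (auto simp: pole_set_def)
  have "(2 * s + 4 * of_nat k) * of_real (ln e) = complex_of_real (2 * pi * of_int m) * \<i>"
    using base_gt_1 unfolding s by (simp add: field_simps)
  moreover have "exp (complex_of_real (2 * pi * of_int m) * \<i>) = 1"
    by (subst exp_eq_1) (auto intro!: exI[of _ m])
  ultimately have "denom k s = 0" by (simp add: denom_exp)
  then show "s \<in> poles" by (auto simp: poles_def)
qed

end

lemma norm_gbinomial_minus_series_le:
  fixes s :: complex
  assumes "0 \<le> t" "t < 1"
  shows "summable (\<lambda>k. norm ((- s) gchoose k) * t ^ k)"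
    and "(\<Sum>k. norm ((- s) gchoose k) * t ^ k) \<le> (1 - t) powr (- norm s)"
proof -
  have majorant: "(\<lambda>k. binomial_majorant (norm s) k * t ^ k) sums (1 - t) powr (- norm s)"
    using assms by (rule binomial_majorant_sums)
  have le: "norm ((- s) gchoose k) * t ^ k \<le> binomial_majorant (norm s) k * t ^ k" for k
    using assms by (intro mult_right_mono norm_gbinomial_minus_le) auto
  show "summable (\<lambda>k. norm ((- s) gchoose k) * t ^ k)"
    using assms le by (intro summable_comparison_test[OF _ sums_summable[OF majorant]]) auto
  then show "(\<Sum>k. norm ((- s) gchoose k) * t ^ k) \<le> (1 - t) powr (- norm s)"
    using suminf_le[OF le _ sums_summable[OF majorant]] majorant by (simp add: sums_iff)
qed

lemma binomial_expansion_cpow: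
  fixes e q \<sigma> :: real and s :: complex and m :: nat
  assumes e: "e > 1" and q: "q > 0" and \<sigma>: "\<bar>\<sigma>\<bar> = 1" and m: "m \<ge> 1"
  shows "(\<lambda>k. ((- s) gchoose k) * of_real \<sigma> ^ k * inverse (complex_of_real e powr (s + 2 * of_nat k)) ^ m)
           sums (complex_of_real ((e ^ m + \<sigma> * (1 / e) ^ m) / sqrt q) powr (- s)
                 / complex_of_real q powr (s / 2))"
proof -
  define a where "a = inverse (complex_of_real e powr s)"
  define z where "z = 1 / e\<^sup>2"
  have "0 < z ^ m" "z ^ m < 1"
    using e m by (auto simp: z_def power_less_one_iff)
  then have small: "\<bar>\<sigma> * z ^ m\<bar> < 1" using \<sigma> by (simp add: abs_mult)
  have "e * z = 1 / e" using e by (simp add: z_def power2_eq_square)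
  then have "(1 / e) ^ m = e ^ m * z ^ m" by (metis power_mult_distrib)
  then have V: "(e ^ m + \<sigma> * (1 / e) ^ m) / sqrt q = e ^ m / sqrt q * (1 + \<sigma> * z ^ m)"
    by (simp add: field_simps)
  have "complex_of_real (e ^ m / sqrt q) powr (- s)
      = exp (- s * complex_of_real (ln (e ^ m / sqrt q)))"
    using e q by (intro cpow_of_real_exp) simp
  also have "\<dots> = exp (s / 2 * complex_of_real (ln q) + of_nat m * (- s * complex_of_real (ln e)))"
    using e q by (simp add: ln_div ln_realpow ln_sqrt algebra_simps)
  also have "\<dots> = complex_of_real q powr (s / 2) * a ^ m"
    unfolding exp_add exp_of_nat_mult using e q by (simp add: cpow_of_real_exp a_def exp_minus)
  finally have "complex_of_real (e ^ m / sqrt q) powr (- s) = complex_of_real q powr (s / 2) * a ^ m" .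
  then have Vpowr: "complex_of_real ((e ^ m + \<sigma> * (1 / e) ^ m) / sqrt q) powr (- s)
      = complex_of_real q powr (s / 2) * (a ^ m * complex_of_real (1 + \<sigma> * z ^ m) powr (- s))"
    unfolding V of_real_mult using e q small by (subst powr_times_real) auto
  have "(\<lambda>k. a ^ m * (((- s) gchoose k) * complex_of_real (\<sigma> * z ^ m) ^ k))
      sums (a ^ m * (1 + complex_of_real (\<sigma> * z ^ m)) powr (- s))"
    using small by (intro sums_mult gen_binomial_complex) (simp only: norm_of_real)
  moreover have "((- s) gchoose k) * of_real \<sigma> ^ k * inverse (complex_of_real e powr (s + 2 * of_nat k)) ^ m
      = a ^ m * (((- s) gchoose k) * complex_of_real (\<sigma> * z ^ m) ^ k)" for k
    unfolding inverse_cpow_of_real_add_nat[of e s k, OF order.strict_trans[OF zero_less_one e]]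
    by (simp add: a_def z_def power_mult_distrib mult_ac flip: power_mult)
  moreover have "complex_of_real ((e ^ m + \<sigma> * (1 / e) ^ m) / sqrt q) powr (- s) / complex_of_real q powr (s / 2)
      = a ^ m * (1 + complex_of_real (\<sigma> * z ^ m)) powr (- s)"
    unfolding Vpowr using q by simp
  ultimately show ?thesis
    by (simp only:)
qed

lemma dirichlet_binomial_expansion:
  fixes e q \<sigma> :: real and c :: nat and s :: complex
  assumes e: "e > 1" and q: "q > 0" and \<sigma>: "\<bar>\<sigma>\<bar> = 1" and c: "c \<ge> 1" and s: "Re s > 0"
  defines "w \<equiv> \<lambda>k::nat. inverse (complex_of_real e powr (s + 2 * of_nat k))"
  shows "(\<lambda>n. complex_of_real ((e ^ (2 * n + c) + \<sigma> * (1 / e) ^ (2 * n + c)) / sqrt q) powr (- s))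
           sums (complex_of_real q powr (s / 2) *
                 (\<Sum>k. ((- s) gchoose k) * of_real \<sigma> ^ k * w k ^ c / (1 - w k ^ 2)))"
proof -
  define f where "f n k = ((- s) gchoose k) * of_real \<sigma> ^ k * w k ^ (2 * n + c)" for n k
  define Q where "Q = complex_of_real q powr (s / 2)"
  define a where "a = e powr (- Re s)"
  define z where "z = 1 / e\<^sup>2"
  have a: "0 < a" "a < 1" using e s by (auto simp: a_def powr_less_one)
  have z: "0 < z" "z < 1" using e by (auto simp: z_def power_less_one_iff)
  have norm_w: "norm (w k) = a * z ^ k" for k
    using e inverse_cpow_of_real_add_nat[of e s k]
    by (simp add: w_def a_def z_def norm_mult norm_power norm_inverse norm_divide norm_cpow_of_real powr_minus)
  have norm_w_less: "norm (w k) < 1" for k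
  proof -
    have "a * z ^ k \<le> a" using mult_left_le[of "z ^ k" a] power_le_one[of z k] a z by simp
    with a show ?thesis using norm_w[of k] by linarith
  qed
  have row: "(\<lambda>k. f n k) sums (complex_of_real ((e ^ (2 * n + c) + \<sigma> * (1 / e) ^ (2 * n + c))
      / sqrt q) powr (- s) / Q)" for n
    unfolding f_def w_def Q_def using e q \<sigma> c by (intro binomial_expansion_cpow) auto
  have norm_f: "norm (f n k) = a ^ (2 * n + c) * (norm ((- s) gchoose k) * (z ^ (2 * n + c)) ^ k)" for n k
    using \<sigma> by (simp add: f_def norm_mult norm_power norm_w power_mult_distrib mult_ac flip: power_mult)
  have zc: "0 \<le> z ^ (2 * n + c)" "z ^ (2 * n + c) < 1" for n
    using z c by (auto simp: power_less_one_iff)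
  have rows: "summable (\<lambda>k. norm (f n k))" for n
    unfolding norm_f using norm_gbinomial_minus_series_le(1)[OF zc] by (rule summable_mult)
  have row_bound: "(\<Sum>k. norm (f n k)) \<le> (1 - z) powr (- norm s) * a ^ c * (a\<^sup>2) ^ n" for n
  proof -
    have "(\<Sum>k. norm (f n k)) \<le> a ^ (2 * n + c) * (1 - z ^ (2 * n + c)) powr (- norm s)"
      unfolding norm_f suminf_mult[OF norm_gbinomial_minus_series_le(1)[OF zc]]
      using norm_gbinomial_minus_series_le(2)[OF zc] a by (intro mult_left_mono) auto
    also have "\<dots> \<le> a ^ (2 * n + c) * (1 - z) powr (- norm s)"
      using z a c power_decreasing[of 1 "2 * n + c" z]
      by (intro mult_left_mono powr_mono2') auto
    also have "\<dots> = (1 - z) powr (- norm s) * a ^ c * (a\<^sup>2) ^ n"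
      unfolding power_add power_mult by (simp only: ac_simps)
    finally show ?thesis .
  qed
  have row_sums: "summable (\<lambda>n. \<Sum>k. norm (f n k))"
  proof (rule summable_comparison_test)
    show "\<exists>N. \<forall>n\<ge>N. norm (\<Sum>k. norm (f n k)) \<le> (1 - z) powr (- norm s) * a ^ c * (a\<^sup>2) ^ n"
      using row_bound by (auto simp: suminf_nonneg rows)
    show "summable (\<lambda>n. (1 - z) powr (- norm s) * a ^ c * (a\<^sup>2) ^ n)"
      using a by (intro summable_mult summable_geometric) (simp add: abs_less_iff power_less_one_iff)
  qed
  have geometric: "f n k = ((- s) gchoose k) * of_real \<sigma> ^ k * w k ^ c * (w k ^ 2) ^ n" for n k
    unfolding f_def power_add power_mult by (simp only: ac_simps)
  have columns: "summable (\<lambda>n. norm (f n k))" for k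
    unfolding geometric norm_mult norm_power using norm_w_less[of k]
    by (intro summable_mult summable_geometric) (auto simp: power_less_one_iff)
  have column: "(\<lambda>n. f n k) sums (((- s) gchoose k) * of_real \<sigma> ^ k * w k ^ c / (1 - w k ^ 2))" for k
  proof -
    have "norm (w k ^ 2) < 1" using norm_w_less[of k] by (simp add: norm_power power_less_one_iff)
    then have "(\<lambda>n. ((- s) gchoose k) * of_real \<sigma> ^ k * w k ^ c * (w k ^ 2) ^ n)
        sums (((- s) gchoose k) * of_real \<sigma> ^ k * w k ^ c * (1 / (1 - w k ^ 2)))"
      by (intro sums_mult geometric_sums)
    then show ?thesis unfolding geometric by simp
  qed
  have "(\<lambda>n. Q * (\<Sum>k. f n k)) sums (Q * (\<Sum>n. \<Sum>k. f n k))"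
    using suminf_swap_norm_summable(1)[OF rows row_sums columns] by (intro sums_mult summable_sums)
  moreover have "(\<Sum>n. \<Sum>k. f n k) = (\<Sum>k. ((- s) gchoose k) * of_real \<sigma> ^ k * w k ^ c / (1 - w k ^ 2))"
    using suminf_swap_norm_summable(2)[OF rows row_sums columns] column by (simp add: sums_iff)
  moreover have "complex_of_real ((e ^ (2 * n + c) + \<sigma> * (1 / e) ^ (2 * n + c)) / sqrt q) powr (- s)
      = Q * (\<Sum>k. f n k)" for n
    using row[of n] q by (simp add: sums_iff Q_def)
  ultimately show ?thesis
    unfolding Q_def by (simp only:)
qed

lemma binomial_pole_series_odd:
  assumes "e > 1" and "q > 0"
  shows "binomial_pole_series e q (\<lambda>k s. complex_of_real e powr (s + 2 * of_nat k))"
  using assms by unfold_locales (auto intro!: holomorphic_intros simp: norm_cpow_of_real)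

lemma binomial_pole_series_even:
  assumes "e > 1" and "q > 0"
  shows "binomial_pole_series e q (\<lambda>k s. (- 1) ^ k)"
  using assms by unfold_locales (auto simp: norm_power intro!: ge_one_powr_ge_zero)

lemma cpow_of_real_square:
  assumes "e > 0"
  shows "(complex_of_real e powr (s + 2 * of_nat k))\<^sup>2 = complex_of_real e powr (2 * s + 4 * of_nat k)"
  using assms by (simp add: powr_power algebra_simps)

text \<open>The right-hand sides below are literally the summands of
  \<open>dirichlet_binomial_expansion\<close> for \<open>\<sigma> = 1, c = 1\<close> and for \<open>\<sigma> = -1, c = 2\<close>.\<close>
lemma G_odd_term_eq:
  assumes "e > 1"
  shows "G_odd_term D e s k = ((- s) gchoose k) * of_real 1 ^ k
    * inverse (complex_of_real e powr (s + 2 * of_nat k)) ^ 1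
    / (1 - inverse (complex_of_real e powr (s + 2 * of_nat k)) ^ 2)"
proof -
  define W where "W = complex_of_real e powr (s + 2 * of_nat k)"
  have "W \<noteq> 0" using assms by (simp add: W_def)
  then have "inverse W ^ 1 / (1 - inverse W ^ 2) = W / (W ^ 2 - 1)"
    using inverse_power_ratio[of W 1] by simp
  then show ?thesis
    unfolding G_odd_term_def times_divide_eq_right[symmetric] W_def[symmetric]
      cpow_of_real_square[OF order.strict_trans[OF zero_less_one assms], symmetric]
    by simp
qed

lemma G_even_term_eq:
  assumes "e > 1"
  shows "G_even_term D e s k = ((- s) gchoose k) * of_real (- 1) ^ k
    * inverse (complex_of_real e powr (s + 2 * of_nat k)) ^ 2
    / (1 - inverse (complex_of_real e powr (s + 2 * of_nat k)) ^ 2)"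
proof -
  define W where "W = complex_of_real e powr (s + 2 * of_nat k)"
  have "W \<noteq> 0" using assms by (simp add: W_def)
  then have "inverse W ^ 2 / (1 - inverse W ^ 2) = 1 / (W ^ 2 - 1)"
    using inverse_power_ratio[of W 2] by simp
  then show ?thesis
    unfolding G_even_term_def times_divide_eq_right[symmetric] W_def[symmetric]
      cpow_of_real_square[OF order.strict_trans[OF zero_less_one assms], symmetric]
    by simp
qed

lemma sums_G_odd:
  assumes e: "e > 1" and q: "real_of_int (qD D) > 0" and conj: "qconj D e = - 1 / e" and s: "Re s > 0"
  shows "(\<lambda>n. complex_of_real (FD D e (2 * n + 1)) powr (- s)) sums G_odd D e s"
proof -
  have "FD D e (2 * n + 1) = (e ^ (2 * n + 1) + 1 * (1 / e) ^ (2 * n + 1)) / sqrt (real_of_int (qD D))"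
    for n
    using conj by (simp add: FD_def power_minus_odd)
  then show ?thesis
    unfolding G_odd_def G_odd_term_eq[OF e]
    using dirichlet_binomial_expansion[OF e q abs_one order_refl s] by (simp only:)
qed

lemma sums_G_even:
  assumes e: "e > 1" and q: "real_of_int (qD D) > 0" and conj: "qconj D e = - 1 / e" and s: "Re s > 0"
  shows "(\<lambda>n. complex_of_real (FD D e (2 * n + 2)) powr (- s)) sums G_even D e s"
proof -
  have "FD D e (2 * n + 2) = (e ^ (2 * n + 2) + (- 1) * (1 / e) ^ (2 * n + 2)) / sqrt (real_of_int (qD D))"
    for n
    using conj by (simp add: FD_def power_minus_even)
  then show ?thesis
    unfolding G_even_def G_even_term_eq[OF e]
    using dirichlet_binomial_expansion[OF e q abs_neg_one one_le_numeral s] by (simp only:)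
qed

theorem mainTheorem3:
  fixes D :: int and e :: real
  assumes "D > 0" and "squarefree D"
    and "is_fundamental_unit D e"
    and "qnorm D e = -1"
  shows "(\<forall>s. s \<notin> pole_set e \<longrightarrow>
            summable (\<lambda>k. norm (G_odd_term D e s k)) \<and>
            summable (\<lambda>k. norm (G_even_term D e s k)))
     \<and> (\<forall>s. Re s > 0 \<longrightarrow>
            summable (\<lambda>n. complex_of_real (FD D e (2 * n + 1)) powr (- s)) \<and>
            summable (\<lambda>n. complex_of_real (FD D e (2 * n + 2)) powr (- s)) \<and>
            Z_odd D e s = G_odd D e s \<and> Z_even D e s = G_even D e s)
     \<and> G_odd D e meromorphic_on UNIV \<and> G_even D e meromorphic_on UNIV
     \<and> G_odd D e analytic_on (UNIV - pole_set e)
     \<and> G_even D e analytic_on (UNIV - pole_set e)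
     \<and> (\<forall>p \<in> pole_set e. is_pole (G_odd D e) p \<and> zorder (G_odd D e) p = -1
                        \<and> is_pole (G_even D e) p \<and> zorder (G_even D e) p = -1)"
proof -
  have e: "e > 1" using assms(3) by (simp add: is_fundamental_unit_def)
  have conj: "qconj D e = - 1 / e" using assms(4) e by (simp add: qnorm_def field_simps)
  have q: "real_of_int (qD D) > 0" using assms(1) by (simp add: qD_def)
  interpret odd: binomial_pole_series e "real_of_int (qD D)" "\<lambda>k s. complex_of_real e powr (s + 2 * of_nat k)"
    using e q by (rule binomial_pole_series_odd)
  interpret even: binomial_pole_series e "real_of_int (qD D)" "\<lambda>k s. (- 1) ^ k"
    using e q by (rule binomial_pole_series_even)
  have odd_term: "G_odd_term D e s = odd.summand s" for s
    by (auto simp: G_odd_term_def odd.summand_def odd.denom_def)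
  have even_term: "G_even_term D e s = even.summand s" for s
    by (auto simp: G_even_term_def even.summand_def even.denom_def)
  have "G_odd D e = odd.series" "G_even D e = even.series"
    by (auto simp: G_odd_def odd.series_def odd_term G_even_def even.series_def even_term)
  moreover have "(\<lambda>n. complex_of_real (FD D e (2 * n + 1)) powr (- s)) sums G_odd D e s"
    "(\<lambda>n. complex_of_real (FD D e (2 * n + 2)) powr (- s)) sums G_even D e s" if "Re s > 0" for s
    using sums_G_odd[OF e q conj that] sums_G_even[OF e q conj that] .
  ultimately show ?thesis
    using odd.summable_norm_summand even.summable_norm_summand odd.series_meromorphic
      even.series_meromorphic odd.series_analytic even.series_analytic odd.series_pole even.series_pole
    unfolding odd_term even_term odd.poles_eq_pole_set even.poles_eq_pole_set
    by (auto simp: Z_odd_def Z_even_def sums_iff)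
qed

end
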